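(* Let $B=A_P[y_1,y_2;\sigma,\delta,\tau]$ be a right double extension of a $K$-algebra $A$, let $k,l\in K$ and $0\neq z=ky_1+ly_2\in B$. Then $zA\subseteq Az+A$ if and only if $kl\sigma_{11}+l^2\sigma_{21}=kl\sigma_{22}+k^2\sigma_{12}$.
   Context: $K$ is a field. Let $A$ be a subalgebra of a $K$-algebra $B$. $B$ is a right double extension of $A$ if: (i) $B$ is generated by $A$ and $y_1,y_2$; (ii) $y_2y_1=p_{12}y_1y_2+p_{11}y_1^2+\tau_1y_1+\tau_2y_2+\tau_0$ for some $p_{12},p_{11}\in K$, $\tau_0,\tau_1,\tau_2\in A$; (iii) $B$ is a free left $A$-module with basis $\{y_1^iy_2^j:i,j\ge0\}$; (iv) $y_1A+y_2A+A\subseteq Ay_1+Ay_2+A$, i.e. there are ($K$-linear) maps $\sigma_{ij},\delta_i\colon A\to A$ ($i,j=1,2$) with $y_1a=\sigma_{11}(a)y_1+\sigma_{12}(a)y_2+\delta_1(a)$ and $y_2a=\sigma_{21}(a)y_1+\sigma_{22}(a)y_2+\delta_2(a)$ for all $a\in A$. One writes $B=A_P[y_1,y_2;\sigma,\delta,\tau]$ with $\sigma=(\sigma_{ij})$, $\delta=(\delta_1,\delta_2)^T$, $P=\{p_{12},p_{11}\}$, $\tau=\{\tau_0,\tau_1,\tau_2\}$. *)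

theory Defs
  imports Main
begin

text \<open>A K-algebra structure on a ring type 'b is given by a ring homomorphism
  emb :: 'k => 'b from the field K into the centre of B; the scalar
  multiplication c . x is emb c * x.  B itself is the whole type 'b.\<close>

definition K_algebra_emb :: "('k::field \<Rightarrow> 'b::ring_1) \<Rightarrow> bool" where
  "K_algebra_emb emb \<longleftrightarrow>
     emb 1 = 1 \<and> (\<forall>c d. emb (c + d) = emb c + emb d) \<and> (\<forall>c d. emb (c * d) = emb c * emb d)
     \<and> (\<forall>c x. emb c * x = x * emb c)"

definition subalgebra :: "('k::field \<Rightarrow> 'b::ring_1) \<Rightarrow> 'b set \<Rightarrow> bool" where
  "subalgebra emb A \<longleftrightarrow>
     0 \<in> A \<and> 1 \<in> A \<and> (\<forall>a\<in>A. \<forall>b\<in>A. a + b \<in> A \<and> a - b \<in> A \<and> a * b \<in> A)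
     \<and> (\<forall>c. \<forall>a\<in>A. emb c * a \<in> A)"

definition K_linear_on :: "('k::field \<Rightarrow> 'b::ring_1) \<Rightarrow> 'b set \<Rightarrow> ('b \<Rightarrow> 'b) \<Rightarrow> bool" where
  "K_linear_on emb A f \<longleftrightarrow>
     (\<forall>a\<in>A. f a \<in> A) \<and> (\<forall>a\<in>A. \<forall>b\<in>A. f (a + b) = f a + f b)
     \<and> (\<forall>c. \<forall>a\<in>A. f (emb c * a) = emb c * f a)"

inductive_set generated :: "('k::field \<Rightarrow> 'b::ring_1) \<Rightarrow> 'b set \<Rightarrow> 'b \<Rightarrow> 'b \<Rightarrow> 'b set"
  for emb A y1 y2 where
  gen_base: "a \<in> A \<Longrightarrow> a \<in> generated emb A y1 y2"
| gen_y1: "y1 \<in> generated emb A y1 y2"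
| gen_y2: "y2 \<in> generated emb A y1 y2"
| gen_one: "1 \<in> generated emb A y1 y2"
| gen_add: "x \<in> generated emb A y1 y2 \<Longrightarrow> y \<in> generated emb A y1 y2 \<Longrightarrow> x + y \<in> generated emb A y1 y2"
| gen_mult: "x \<in> generated emb A y1 y2 \<Longrightarrow> y \<in> generated emb A y1 y2 \<Longrightarrow> x * y \<in> generated emb A y1 y2"
| gen_smult: "x \<in> generated emb A y1 y2 \<Longrightarrow> emb c * x \<in> generated emb A y1 y2"

definition free_left_module_basis :: "'b::ring_1 set \<Rightarrow> 'b \<Rightarrow> 'b \<Rightarrow> bool" where
  "free_left_module_basis A y1 y2 \<longleftrightarrow>
     (\<forall>b. \<exists>S c. finite S \<and> (\<forall>p\<in>S. c p \<in> A) \<and>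
         b = (\<Sum>(i,j)\<in>S. c (i,j) * y1 ^ i * y2 ^ j))
   \<and> (\<forall>S c. finite S \<and> (\<forall>p\<in>S. c p \<in> A) \<and>
         (\<Sum>(i,j)\<in>S. c (i,j) * y1 ^ i * y2 ^ j) = 0 \<longrightarrow> (\<forall>p\<in>S. c p = 0))"

definition right_double_extension ::
  "('k::field \<Rightarrow> 'b::ring_1) \<Rightarrow> 'b set \<Rightarrow> 'b \<Rightarrow> 'b \<Rightarrow> 'k \<Rightarrow> 'k \<Rightarrow> 'b \<Rightarrow> 'b \<Rightarrow> 'b \<Rightarrow>
   ('b \<Rightarrow> 'b) \<Rightarrow> ('b \<Rightarrow> 'b) \<Rightarrow> ('b \<Rightarrow> 'b) \<Rightarrow> ('b \<Rightarrow> 'b) \<Rightarrow> ('b \<Rightarrow> 'b) \<Rightarrow> ('b \<Rightarrow> 'b) \<Rightarrow> bool" where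
  "right_double_extension emb A y1 y2 p12 p11 \<tau>0 \<tau>1 \<tau>2 \<sigma>11 \<sigma>12 \<sigma>21 \<sigma>22 \<delta>1 \<delta>2 \<longleftrightarrow>
     K_algebra_emb emb \<and> subalgebra emb A
   \<and> generated emb A y1 y2 = UNIV
   \<and> \<tau>0 \<in> A \<and> \<tau>1 \<in> A \<and> \<tau>2 \<in> A
   \<and> y2 * y1 = emb p12 * y1 * y2 + emb p11 * y1 ^ 2 + \<tau>1 * y1 + \<tau>2 * y2 + \<tau>0
   \<and> free_left_module_basis A y1 y2
   \<and> K_linear_on emb A \<sigma>11 \<and> K_linear_on emb A \<sigma>12 \<and> K_linear_on emb A \<sigma>21
   \<and> K_linear_on emb A \<sigma>22 \<and> K_linear_on emb A \<delta>1 \<and> K_linear_on emb A \<delta>2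
   \<and> (\<forall>a\<in>A. y1 * a = \<sigma>11 a * y1 + \<sigma>12 a * y2 + \<delta>1 a)
   \<and> (\<forall>a\<in>A. y2 * a = \<sigma>21 a * y1 + \<sigma>22 a * y2 + \<delta>2 a)"

end

theory Submission
  imports Defs
begin

text \<open>Write \<open>z a = u\<^sub>1 y\<^sub>1 + u\<^sub>2 y\<^sub>2 + u\<^sub>0\<close> with \<open>u\<^sub>1 = k\<sigma>\<^sub>1\<^sub>1(a) + l\<sigma>\<^sub>2\<^sub>1(a)\<close> and
  \<open>u\<^sub>2 = k\<sigma>\<^sub>1\<^sub>2(a) + l\<sigma>\<^sub>2\<^sub>2(a)\<close>, while \<open>a' z = (ka') y\<^sub>1 + (la') y\<^sub>2\<close> because scalars are
  central. By freeness of \<open>B\<close> over \<open>A\<close> on the monomials \<open>1, y\<^sub>1, y\<^sub>2\<close>, \<open>z a \<in> A z + A\<close> holds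
  iff \<open>u\<^sub>1 = ka'\<close> and \<open>u\<^sub>2 = la'\<close> for some \<open>a' \<in> A\<close>; since \<open>(k, l) \<noteq> (0, 0)\<close> this is
  equivalent to the proportionality \<open>l u\<^sub>1 = k u\<^sub>2\<close>, which expands to the stated identity.\<close>

lemma K_algebra_embD:
  assumes "K_algebra_emb (emb :: 'k::field \<Rightarrow> 'b::ring_1)"
  shows K_algebra_emb_zero: "emb 0 = 0"
    and K_algebra_emb_one: "emb 1 = 1"
    and K_algebra_emb_mult: "emb (c * d) = emb c * emb d"
    and K_algebra_emb_central: "emb c * x = x * emb c"
proof -
  have "emb (0 + 0) = emb 0 + emb 0" using assms unfolding K_algebra_emb_def by blast
  then show "emb 0 = 0" by simp
qed (use assms in \<open>unfold K_algebra_emb_def, blast+\<close>)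

lemma K_algebra_emb_left_commute:
  assumes "K_algebra_emb (emb :: 'k::field \<Rightarrow> 'b::ring_1)"
  shows "emb c * (emb d * x) = emb d * (emb c * x)"
  by (metis K_algebra_emb_central[OF assms] mult.assoc)

lemma K_algebra_emb_left_cancel:
  assumes "K_algebra_emb (emb :: 'k::field \<Rightarrow> 'b::ring_1)" and "c \<noteq> 0"
  shows "emb c * x = emb c * y \<longleftrightarrow> x = y"
proof
  assume "emb c * x = emb c * y"
  then have "emb (inverse c * c) * x = emb (inverse c * c) * y"
    by (simp add: K_algebra_emb_mult[OF assms(1)] mult.assoc)
  then show "x = y" using assms by (simp add: K_algebra_emb_one)
qed simp

lemma subalgebraD:
  assumes "subalgebra emb A" and "a \<in> A" and "b \<in> A"
  shows subalgebra_add: "a + b \<in> A"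
    and subalgebra_diff: "a - b \<in> A"
    and subalgebra_scale: "emb c * a \<in> A"
  using assms unfolding subalgebra_def by blast+

lemma ex_emb_preimage_pair_iff:
  assumes emb: "K_algebra_emb (emb :: 'k::field \<Rightarrow> 'b::ring_1)"
    and sub: "subalgebra emb A"
    and "k \<noteq> 0 \<or> l \<noteq> 0" and u: "u\<^sub>1 \<in> A" "u\<^sub>2 \<in> A"
  shows "(\<exists>a\<in>A. emb k * a = u\<^sub>1 \<and> emb l * a = u\<^sub>2) \<longleftrightarrow> emb l * u\<^sub>1 = emb k * u\<^sub>2"
proof
  assume "\<exists>a\<in>A. emb k * a = u\<^sub>1 \<and> emb l * a = u\<^sub>2"
  then show "emb l * u\<^sub>1 = emb k * u\<^sub>2"
    using K_algebra_emb_left_commute[OF emb] by blast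
next
  assume proportional: "emb l * u\<^sub>1 = emb k * u\<^sub>2"
  note commute = K_algebra_emb_left_commute[OF emb]
  note cancel = K_algebra_emb_left_cancel[OF emb]
  have inv: "emb c * (emb (inverse c) * x) = x" if "c \<noteq> 0" for c x
    using that by (simp add: mult.assoc[symmetric] K_algebra_emb_mult[OF emb, symmetric]
        K_algebra_emb_one[OF emb])
  consider "k \<noteq> 0" | "l \<noteq> 0" using assms(3) by blast
  then show "\<exists>a\<in>A. emb k * a = u\<^sub>1 \<and> emb l * a = u\<^sub>2"
  proof cases
    case 1
    define a where "a = emb (inverse k) * u\<^sub>1"
    have "emb k * (emb l * a) = emb k * u\<^sub>2"
      using inv[OF 1] proportional by (simp add: a_def commute[of k l])
    then show ?thesis
      using 1 inv[OF 1] u by (intro bexI[of _ a]) (auto simp: a_def cancel subalgebra_scale[OF sub])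
  next
    case 2
    define a where "a = emb (inverse l) * u\<^sub>2"
    have "emb l * (emb k * a) = emb l * u\<^sub>1"
      using inv[OF 2] proportional by (simp add: a_def commute[of l k])
    then show ?thesis
      using 2 inv[OF 2] u by (intro bexI[of _ a]) (auto simp: a_def cancel subalgebra_scale[OF sub])
  qed
qed

lemma free_left_module_basis_coeffs_eq_zero:
  fixes A :: "'a::ring_1 set"
  assumes "free_left_module_basis A y\<^sub>1 y\<^sub>2"
    and "c\<^sub>1 \<in> A" "c\<^sub>2 \<in> A" "c\<^sub>0 \<in> A" and "c\<^sub>1 * y\<^sub>1 + c\<^sub>2 * y\<^sub>2 + c\<^sub>0 = 0"
  shows "c\<^sub>1 = 0 \<and> c\<^sub>2 = 0 \<and> c\<^sub>0 = 0"
proof -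
  define S :: "(nat \<times> nat) set" where "S = {(1, 0), (0, 1), (0, 0)}"
  define c :: "nat \<times> nat \<Rightarrow> 'a"
    where "c p = (if p = (1, 0) then c\<^sub>1 else if p = (0, 1) then c\<^sub>2 else c\<^sub>0)" for p
  have "(\<Sum>(i, j)\<in>S. c (i, j) * y\<^sub>1 ^ i * y\<^sub>2 ^ j) = c\<^sub>1 * y\<^sub>1 + c\<^sub>2 * y\<^sub>2 + c\<^sub>0"
    by (simp add: S_def c_def algebra_simps)
  moreover have "finite S" "\<forall>p\<in>S. c p \<in> A"
    using assms(2-4) by (auto simp: S_def c_def)
  ultimately have "\<forall>p\<in>S. c p = 0"
    using assms(1,5) unfolding free_left_module_basis_def by simp
  then show ?thesis by (simp add: S_def c_def)
qed

lemma free_left_module_basis_coeffs_unique: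
  assumes "subalgebra emb A" and "free_left_module_basis A y\<^sub>1 y\<^sub>2"
    and "c\<^sub>1 \<in> A" "c\<^sub>2 \<in> A" "c\<^sub>0 \<in> A" "d\<^sub>1 \<in> A" "d\<^sub>2 \<in> A" "d\<^sub>0 \<in> A"
    and "c\<^sub>1 * y\<^sub>1 + c\<^sub>2 * y\<^sub>2 + c\<^sub>0 = d\<^sub>1 * y\<^sub>1 + d\<^sub>2 * y\<^sub>2 + d\<^sub>0"
  shows "c\<^sub>1 = d\<^sub>1 \<and> c\<^sub>2 = d\<^sub>2 \<and> c\<^sub>0 = d\<^sub>0"
proof -
  have "(c\<^sub>1 - d\<^sub>1) * y\<^sub>1 + (c\<^sub>2 - d\<^sub>2) * y\<^sub>2 + (c\<^sub>0 - d\<^sub>0) = 0"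
    using assms(9) by (simp add: algebra_simps)
  then have "c\<^sub>1 - d\<^sub>1 = 0 \<and> c\<^sub>2 - d\<^sub>2 = 0 \<and> c\<^sub>0 - d\<^sub>0 = 0"
    using assms(3-8) by (intro free_left_module_basis_coeffs_eq_zero[OF assms(2)])
      (simp_all add: subalgebra_diff[OF assms(1)])
  then show ?thesis by simp
qed

lemma in_left_multiples_plus_iff:
  assumes emb: "K_algebra_emb (emb :: 'k::field \<Rightarrow> 'b::ring_1)"
    and sub: "subalgebra emb A" and free: "free_left_module_basis A y\<^sub>1 y\<^sub>2"
    and u: "u\<^sub>1 \<in> A" "u\<^sub>2 \<in> A" "u\<^sub>0 \<in> A"
    and z: "z = emb k * y\<^sub>1 + emb l * y\<^sub>2"
  shows "(\<exists>a'\<in>A. \<exists>a''\<in>A. u\<^sub>1 * y\<^sub>1 + u\<^sub>2 * y\<^sub>2 + u\<^sub>0 = a' * z + a'') \<longleftrightarrow>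
         (\<exists>a'\<in>A. emb k * a' = u\<^sub>1 \<and> emb l * a' = u\<^sub>2)"
proof -
  have az: "a' * z = (emb k * a') * y\<^sub>1 + (emb l * a') * y\<^sub>2" for a'
    by (simp add: z distrib_left mult.assoc[symmetric] K_algebra_emb_central[OF emb, of _ a'])
  show ?thesis
  proof
    assume "\<exists>a'\<in>A. \<exists>a''\<in>A. u\<^sub>1 * y\<^sub>1 + u\<^sub>2 * y\<^sub>2 + u\<^sub>0 = a' * z + a''"
    then obtain a' a'' where "a' \<in> A" "a'' \<in> A"
      and "u\<^sub>1 * y\<^sub>1 + u\<^sub>2 * y\<^sub>2 + u\<^sub>0 = (emb k * a') * y\<^sub>1 + (emb l * a') * y\<^sub>2 + a''"
      by (auto simp: az)
    then show "\<exists>a'\<in>A. emb k * a' = u\<^sub>1 \<and> emb l * a' = u\<^sub>2"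
      using free_left_module_basis_coeffs_unique[OF sub free] u subalgebra_scale[OF sub]
      by metis
  next
    assume "\<exists>a'\<in>A. emb k * a' = u\<^sub>1 \<and> emb l * a' = u\<^sub>2"
    then show "\<exists>a'\<in>A. \<exists>a''\<in>A. u\<^sub>1 * y\<^sub>1 + u\<^sub>2 * y\<^sub>2 + u\<^sub>0 = a' * z + a''"
      using u(3) by (auto simp: az)
  qed
qed

theorem lemma2p3:
  fixes emb :: "'k::field \<Rightarrow> 'b::ring_1"
    and A :: "'b set" and y1 y2 \<tau>0 \<tau>1 \<tau>2 :: 'b and p12 p11 k l :: 'k
    and \<sigma>11 \<sigma>12 \<sigma>21 \<sigma>22 \<delta>1 \<delta>2 :: "'b \<Rightarrow> 'b"
  assumes "right_double_extension emb A y1 y2 p12 p11 \<tau>0 \<tau>1 \<tau>2 \<sigma>11 \<sigma>12 \<sigma>21 \<sigma>22 \<delta>1 \<delta>2"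
    and "z = emb k * y1 + emb l * y2"
    and "z \<noteq> 0"
  shows "(\<forall>a\<in>A. \<exists>a'\<in>A. \<exists>a''\<in>A. z * a = a' * z + a'') \<longleftrightarrow>
         (\<forall>a\<in>A. emb (k * l) * \<sigma>11 a + emb (l ^ 2) * \<sigma>21 a
                = emb (k * l) * \<sigma>22 a + emb (k ^ 2) * \<sigma>12 a)"
proof (intro ball_cong refl)
  note D = assms(1)[unfolded right_double_extension_def K_linear_on_def]
  have emb: "K_algebra_emb emb" and sub: "subalgebra emb A"
    and free: "free_left_module_basis A y1 y2" using D by blast+
  note A_closed = subalgebra_add[OF sub] subalgebra_scale[OF sub]
  have "k \<noteq> 0 \<or> l \<noteq> 0" using assms(2,3) K_algebra_emb_zero[OF emb] by auto
  fix a assume a: "a \<in> A"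
  define u\<^sub>1 where "u\<^sub>1 = emb k * \<sigma>11 a + emb l * \<sigma>21 a"
  define u\<^sub>2 where "u\<^sub>2 = emb k * \<sigma>12 a + emb l * \<sigma>22 a"
  define u\<^sub>0 where "u\<^sub>0 = emb k * \<delta>1 a + emb l * \<delta>2 a"
  have u: "u\<^sub>1 \<in> A" "u\<^sub>2 \<in> A" "u\<^sub>0 \<in> A"
    using a D unfolding u\<^sub>1_def u\<^sub>2_def u\<^sub>0_def by (meson A_closed)+
  have "z * a = u\<^sub>1 * y1 + u\<^sub>2 * y2 + u\<^sub>0"
    using a D by (simp add: assms(2) u\<^sub>1_def u\<^sub>2_def u\<^sub>0_def algebra_simps)
  then have "(\<exists>a'\<in>A. \<exists>a''\<in>A. z * a = a' * z + a'') \<longleftrightarrow> emb l * u\<^sub>1 = emb k * u\<^sub>2"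
    using in_left_multiples_plus_iff[OF emb sub free u assms(2)]
      ex_emb_preimage_pair_iff[OF emb sub \<open>k \<noteq> 0 \<or> l \<noteq> 0\<close> u(1,2)] by simp
  also have "\<dots> \<longleftrightarrow> emb (k * l) * \<sigma>11 a + emb (l ^ 2) * \<sigma>21 a
                = emb (k * l) * \<sigma>22 a + emb (k ^ 2) * \<sigma>12 a"
    by (simp add: u\<^sub>1_def u\<^sub>2_def power2_eq_square K_algebra_emb_mult[OF emb] distrib_left
        mult.assoc[symmetric] K_algebra_emb_central[OF emb, of l "emb k"] add.commute)
  finally show "(\<exists>a'\<in>A. \<exists>a''\<in>A. z * a = a' * z + a'') \<longleftrightarrow> \<dots>" .
qed

end
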